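(* Let $(x_n)_{n\ge1}$ be a sequence of real numbers such that $x_{n+1}-x_n\ge\frac{c\log n}{n}$ for some constant $c>0$. Suppose that for some $\varepsilon_0>0$, $$\mathrm{cov}\big(X_N-X_N,\gamma_N\big)\ll N,\qquad \gamma_N=\frac{1}{N(\log N)^{1+\varepsilon_0}}.$$ Then for every $\varepsilon>0$ and almost every $\alpha\in\mathbb{R}$, $$\delta_{\min}^{\alpha}(N)\gg\frac{1}{N(\log N)^{1+\varepsilon}},$$ with implied constant depending on $\alpha,\varepsilon$.
   Context: $X_N=\{x_1,\dots,x_N\}$ and $X_N-X_N=\{a-b : a,b\in X_N\}$. For $A\subset\mathbb{R}$ and $\gamma>0$, the covering number is $\mathrm{cov}(A,\gamma)=\inf\{|B| : B\subset\mathbb{R},\ \forall a\in A\ \exists b\in B,\ |a-b|<\gamma\}$. For $x\in\mathbb{R}$, $\|x\|=\min_{k\in\mathbb{Z}}|x-k|$, and $\delta_{\min}^{\alpha}(N)=\min\{\|\alpha x_m-\alpha x_n\| : 1\le m,n\le N,\ m\ne n\}$. *)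

theory Defs
  imports "HOL-Analysis.Analysis"
begin

text \<open>Only finite B are considered
  (for finite A, as in the application, this does not change the infimum).\<close>
definition cov :: "real set \<Rightarrow> real \<Rightarrow> nat" where
  "cov A \<gamma> = Inf {card B | B. finite B \<and> (\<forall>a\<in>A. \<exists>b\<in>B. \<bar>a - b\<bar> < \<gamma>)}"

definition dist_int :: "real \<Rightarrow> real" where
  "dist_int x = Inf {\<bar>x - real_of_int k\<bar> | k. True}"

definition Xset :: "(nat \<Rightarrow> real) \<Rightarrow> nat \<Rightarrow> real set" where
  "Xset x N = x ` {1..N}"

definition diffset :: "real set \<Rightarrow> real set" where
  "diffset A = {a - b | a b. a \<in> A \<and> b \<in> A}"

text \<open>delta_min^alpha(N), for N >= 2.\<close>
definition delta_min :: "(nat \<Rightarrow> real) \<Rightarrow> real \<Rightarrow> nat \<Rightarrow> real" where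
  "delta_min x \<alpha> N = Min {dist_int (\<alpha> * x m - \<alpha> * x n) | m n.
      m \<in> {1..N} \<and> n \<in> {1..N} \<and> m \<noteq> n}"

end

theory Submission
  imports Defs "HOL-Real_Asymp.Real_Asymp"
begin

text \<open>The gap condition gives \<open>|x m - x n| \<ge> g / N\<close> for distinct \<open>m, n \<le> N\<close>. Fix
  \<open>1/A \<le> |\<alpha>| \<le> A\<close>. A small difference \<open>d\<close> (\<open>|d| < 1/(2A)\<close>) then has
  \<open>dist_int (\<alpha> d) = |\<alpha> d| \<ge> g/(A N)\<close>. A large one lies within \<open>\<gamma>_N\<close> of a point \<open>b\<close>,
  \<open>|b| \<ge> 1/(4A)\<close>, of a cover of \<open>X_N - X_N\<close> by \<open>O(N)\<close> points, and
  \<open>dist_int (\<alpha> d) < \<delta>_N = 1/(N (log N)^(1+\<epsilon>))\<close> forces \<open>dist_int (\<alpha> b) < \<eta>_N = \<delta>_N + A \<gamma>_N\<close>.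
  For each \<open>b\<close> this confines \<open>\<alpha>\<close> to \<open>O(A |b|)\<close> intervals of length \<open>2 \<eta>_N / |b|\<close>, so the
  exceptional set at scale \<open>N\<close> has measure \<open>O(N \<eta>_N) = O((log N)^-(1+\<epsilon>) + (log N)^-(1+\<epsilon>0))\<close>,
  which is summable along \<open>N = 2^(j+1)\<close>; by Borel--Cantelli almost every \<open>\<alpha>\<close> lies in only
  finitely many of these sets. As \<open>delta_min x \<alpha> N\<close> decreases in \<open>N\<close> and is positive unless some
  \<open>\<alpha> (x m - x n)\<close> is an integer, which happens for only countably many \<open>\<alpha>\<close>, the dyadic bound
  extends to all \<open>N \<ge> 2\<close>.\<close>

section \<open>Distance to the nearest integer\<close>

lemma dist_int_le: "dist_int y \<le> \<bar>y - of_int k\<bar>"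
  unfolding dist_int_def by (rule cInf_lower) (auto intro: bdd_belowI[of _ 0])

lemma dist_int_greatest: "(\<And>k::int. B \<le> \<bar>y - of_int k\<bar>) \<Longrightarrow> B \<le> dist_int y"
  unfolding dist_int_def by (rule cInf_greatest) auto

lemma dist_int_lessE:
  assumes "dist_int y < \<eta>"
  obtains k :: int where "\<bar>y - of_int k\<bar> < \<eta>"
  using cInf_lessD[of "{\<bar>y - real_of_int k\<bar> | k. True}" \<eta>] assms
  unfolding dist_int_def by auto

lemma dist_int_le_add_abs_diff: "dist_int y \<le> dist_int z + \<bar>y - z\<bar>"
proof -
  have "dist_int y - \<bar>y - z\<bar> \<le> dist_int z"
  proof (rule dist_int_greatest)
    fix k :: int
    have "dist_int y \<le> \<bar>y - of_int k\<bar>" by (rule dist_int_le)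
    then show "dist_int y - \<bar>y - z\<bar> \<le> \<bar>z - of_int k\<bar>" by linarith
  qed
  then show ?thesis by linarith
qed

lemma dist_int_eq_abs: "\<bar>y\<bar> \<le> 1/2 \<Longrightarrow> dist_int y = \<bar>y\<bar>"
proof (rule antisym)
  show "dist_int y \<le> \<bar>y\<bar>" using dist_int_le[of y 0] by simp
  assume "\<bar>y\<bar> \<le> 1/2"
  show "\<bar>y\<bar> \<le> dist_int y"
  proof (rule dist_int_greatest)
    fix k :: int
    show "\<bar>y\<bar> \<le> \<bar>y - of_int k\<bar>"
    proof (cases "k = 0")
      case False
      then have "\<bar>real_of_int k\<bar> \<ge> 1" by linarith
      with \<open>\<bar>y\<bar> \<le> 1/2\<close> show ?thesis by linarith
    qed simp
  qed
qed

lemma dist_int_pos: "y \<notin> \<int> \<Longrightarrow> 0 < dist_int y"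
proof -
  assume "y \<notin> \<int>"
  then have "of_int \<lfloor>y\<rfloor> < y" "y < of_int \<lfloor>y\<rfloor> + 1"
    using of_int_floor_le[of y] Ints_of_int[of "\<lfloor>y\<rfloor>"] by (metis order_less_le, linarith)
  moreover have "min (y - of_int \<lfloor>y\<rfloor>) (of_int \<lfloor>y\<rfloor> + 1 - y) \<le> dist_int y"
  proof (rule dist_int_greatest)
    fix k :: int
    show "min (y - of_int \<lfloor>y\<rfloor>) (of_int \<lfloor>y\<rfloor> + 1 - y) \<le> \<bar>y - of_int k\<bar>"
    proof (cases "k \<le> \<lfloor>y\<rfloor>")
      case True
      then have "real_of_int k \<le> of_int \<lfloor>y\<rfloor>" by simp
      then show ?thesis by linarith
    next
      case False
      then have "real_of_int k \<ge> of_int \<lfloor>y\<rfloor> + 1" by linarith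
      then show ?thesis by linarith
    qed
  qed
  ultimately show ?thesis by linarith
qed

section \<open>Coverings and minimal gaps\<close>

lemma finite_diffset:
  assumes "finite A"
  shows "finite (diffset A)"
proof -
  have "diffset A = (\<lambda>(a, b). a - b) ` (A \<times> A)" unfolding diffset_def by auto
  then show ?thesis using assms by simp
qed

lemma cov_attained:
  assumes "finite S" "\<gamma> > 0"
  obtains B where "finite B" "\<forall>a\<in>S. \<exists>b\<in>B. \<bar>a - b\<bar> < \<gamma>" "card B = cov S \<gamma>"
proof -
  let ?K = "{card B | B. finite B \<and> (\<forall>a\<in>S. \<exists>b\<in>B. \<bar>a - b\<bar> < \<gamma>)}"
  have "card S \<in> ?K" using assms by force
  then have "cov S \<gamma> \<in> ?K" unfolding cov_def by (intro Inf_nat_def1) blast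
  then show ?thesis using that by auto
qed

lemma cov_bound_imp_coverings:
  fixes x :: "nat \<Rightarrow> real" and \<gamma> :: "nat \<Rightarrow> real"
  assumes "\<And>N. 2 \<le> N \<Longrightarrow> 0 < \<gamma> N"
    and "\<And>N. 2 \<le> N \<Longrightarrow> real (cov (diffset (Xset x N)) (\<gamma> N)) \<le> C * real N"
  obtains B where "\<And>N. finite (B N)"
    "\<And>N. 2 \<le> N \<Longrightarrow> \<forall>a\<in>diffset (Xset x N). \<exists>b\<in>B N. \<bar>a - b\<bar> < \<gamma> N"
    "\<And>N. 2 \<le> N \<Longrightarrow> real (card (B N)) \<le> C * real N"
proof -
  have "\<exists>B. finite B \<and> (2 \<le> N \<longrightarrow>
      (\<forall>a\<in>diffset (Xset x N). \<exists>b\<in>B. \<bar>a - b\<bar> < \<gamma> N) \<and> real (card B) \<le> C * real N)" for N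
  proof (cases "2 \<le> N")
    case True
    have "finite (diffset (Xset x N))" unfolding Xset_def by (simp add: finite_diffset)
    then show ?thesis
      using cov_attained[OF _ assms(1)[OF True]] assms(2)[OF True] by metis
  qed blast
  then show ?thesis using that by metis
qed

lemma finite_delta_min_set:
  fixes x :: "nat \<Rightarrow> real"
  shows "finite {dist_int (\<alpha> * x m - \<alpha> * x n) | m n. m \<in> {1..N} \<and> n \<in> {1..N} \<and> m \<noteq> n}"
proof -
  have "{dist_int (\<alpha> * x m - \<alpha> * x n) | m n. m \<in> {1..N} \<and> n \<in> {1..N} \<and> m \<noteq> n} \<subseteq>
      (\<lambda>(m, n). dist_int (\<alpha> * x m - \<alpha> * x n)) ` ({1..N} \<times> {1..N})"
    (is "?S \<subseteq> _") by force
  then show "finite ?S" by (rule finite_subset) simp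
qed

lemma delta_min_le:
  "m \<in> {1..N} \<Longrightarrow> n \<in> {1..N} \<Longrightarrow> m \<noteq> n \<Longrightarrow> delta_min x \<alpha> N \<le> dist_int (\<alpha> * x m - \<alpha> * x n)"
  unfolding delta_min_def by (rule Min_le[OF finite_delta_min_set]) auto

lemma delta_min_attained:
  assumes "N \<ge> 2"
  obtains m n where "m \<in> {1..N}" "n \<in> {1..N}" "m \<noteq> n"
    "delta_min x \<alpha> N = dist_int (\<alpha> * x m - \<alpha> * x n)"
proof -
  have "dist_int (\<alpha> * x 1 - \<alpha> * x 2) \<in>
      {dist_int (\<alpha> * x m - \<alpha> * x n) | m n. m \<in> {1..N} \<and> n \<in> {1..N} \<and> m \<noteq> n}"
    using assms by force
  then have "delta_min x \<alpha> N \<in>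
      {dist_int (\<alpha> * x m - \<alpha> * x n) | m n. m \<in> {1..N} \<and> n \<in> {1..N} \<and> m \<noteq> n}"
    unfolding delta_min_def by (intro Min_in finite_delta_min_set) blast
  then show ?thesis using that by blast
qed

lemma delta_min_antimono: "2 \<le> N \<Longrightarrow> N \<le> N' \<Longrightarrow> delta_min x \<alpha> N' \<le> delta_min x \<alpha> N"
  by (rule delta_min_attained[of N x \<alpha>]) (auto intro!: delta_min_le)

lemma delta_min_pos:
  assumes "N \<ge> 2" "\<And>m n. m \<in> {1..N} \<Longrightarrow> n \<in> {1..N} \<Longrightarrow> m \<noteq> n \<Longrightarrow> \<alpha> * (x m - x n) \<notin> \<int>"
  shows "0 < delta_min x \<alpha> N"
proof (rule delta_min_attained[OF assms(1), of x \<alpha>])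
  fix m n assume "m \<in> {1..N}" "n \<in> {1..N}" "m \<noteq> n"
    and "delta_min x \<alpha> N = dist_int (\<alpha> * x m - \<alpha> * x n)"
  then show ?thesis using assms(2) by (simp add: right_diff_distrib dist_int_pos)
qed

lemma AE_mult_differences_notin_Ints:
  fixes x :: "nat \<Rightarrow> real"
  assumes "inj_on x {1..}"
  shows "AE \<alpha> in lborel. \<forall>m\<ge>1. \<forall>n\<ge>1. m \<noteq> n \<longrightarrow> \<alpha> * (x m - x n) \<notin> \<int>"
proof (rule AE_I')
  show "(\<lambda>((m, n), k). of_int k / (x m - x n)) ` UNIV \<in> null_sets lborel"
    by (intro countable_imp_null_set_lborel) simp
  show "{\<alpha> \<in> space lborel. \<not> (\<forall>m\<ge>1. \<forall>n\<ge>1. m \<noteq> n \<longrightarrow> \<alpha> * (x m - x n) \<notin> \<int>)}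
      \<subseteq> (\<lambda>((m, n), k). of_int k / (x m - x n)) ` UNIV"
  proof
    fix \<alpha> assume "\<alpha> \<in> {\<alpha> \<in> space lborel. \<not> (\<forall>m\<ge>1. \<forall>n\<ge>1. m \<noteq> n \<longrightarrow> \<alpha> * (x m - x n) \<notin> \<int>)}"
    then obtain m n where mn: "1 \<le> m" "1 \<le> n" "m \<noteq> n" "\<alpha> * (x m - x n) \<in> \<int>" by auto
    then obtain k where "\<alpha> * (x m - x n) = of_int k" by (auto elim: Ints_cases)
    moreover have "x m - x n \<noteq> 0" using inj_onD[OF assms, of m n] mn by auto
    ultimately have "\<alpha> = of_int k / (x m - x n)" by (simp add: eq_divide_eq)
    then show "\<alpha> \<in> (\<lambda>((m, n), k). of_int k / (x m - x n)) ` UNIV" by (auto intro!: image_eqI[of _ _ "((m, n), k)"])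
  qed
qed

lemma gap_imp_separated:
  fixes x :: "nat \<Rightarrow> real"
  assumes "0 < c"
    and gap: "\<And>n. n \<ge> 1 \<Longrightarrow> x (n + 1) - x n \<ge> c * ln (real n) / real n"
    and inj: "inj_on x {1..}"
  obtains g where "0 < g" "\<And>M m n. m \<in> {1..M} \<Longrightarrow> n \<in> {1..M} \<Longrightarrow> m \<noteq> n \<Longrightarrow> g / real M \<le> \<bar>x m - x n\<bar>"
proof -
  have x_step: "x n \<le> x (n + 1)" if "n \<ge> 1" for n
  proof -
    have "0 \<le> c * ln (real n) / real n" using \<open>0 < c\<close> that by simp
    then show ?thesis using gap[OF that] by linarith
  qed
  have mono: "x n \<le> x m" if "1 \<le> n" "n \<le> m" for n m
    using that(2)
  proof (induction m rule: dec_induct)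
    case (step k)
    then show ?case using x_step[of k] that(1) by simp
  qed simp
  \<comment> \<open>the gap condition says nothing at \<open>n = 1\<close> since \<open>ln 1 = 0\<close>; injectivity covers that step\<close>
  have "x 1 \<noteq> x 2" using inj_onD[OF inj, of 1 2] by auto
  then have "x 1 < x 2" using x_step[of 1] by (simp add: numeral_2_eq_2)
  define g where "g = min (x 2 - x 1) (c * ln 2)"
  have "0 < g" using \<open>x 1 < x 2\<close> \<open>0 < c\<close> by (simp add: g_def)
  have ordered: "g / real M \<le> x m - x n" if "1 \<le> n" "n < m" "m \<le> M" for M m n
  proof -
    have "g / real M \<le> x (n + 1) - x n"
    proof (cases "n = 1")
      case True
      have "g / real M \<le> g" using \<open>0 < g\<close> that by (simp add: divide_le_eq)
      then show ?thesis using True by (simp add: g_def numeral_2_eq_2)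
    next
      case False
      then have "2 \<le> n" using that by simp
      have "g / real M \<le> c * ln 2 / real n"
        using that \<open>2 \<le> n\<close> \<open>0 < c\<close> by (intro frac_le) (auto simp: g_def)
      also have "\<dots> \<le> c * ln (real n) / real n"
        using \<open>2 \<le> n\<close> \<open>0 < c\<close> by (intro divide_right_mono mult_left_mono) auto
      also have "\<dots> \<le> x (n + 1) - x n" using gap that by simp
      finally show ?thesis .
    qed
    moreover have "x (n + 1) \<le> x m" using mono that by simp
    ultimately show ?thesis by linarith
  qed
  show ?thesis
  proof (rule that[OF \<open>0 < g\<close>])
    fix M m n :: nat assume "m \<in> {1..M}" "n \<in> {1..M}" "m \<noteq> n"
    then consider "n < m" | "m < n" by linarith
    then show "g / real M \<le> \<bar>x m - x n\<bar>"
      by cases (use ordered \<open>m \<in> {1..M}\<close> \<open>n \<in> {1..M}\<close> in \<open>fastforce+\<close>)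
  qed
qed

section \<open>Logarithmic scales\<close>

text \<open>\<open>gamma_scale (1 + \<epsilon>0) N\<close> is the covering scale \<open>\<gamma>_N\<close> of the hypothesis, and the claimed bound
  is \<open>C * gamma_scale (1 + \<epsilon>) N \<le> delta_min x \<alpha> N\<close>.\<close>
definition gamma_scale :: "real \<Rightarrow> nat \<Rightarrow> real" where
  "gamma_scale p N = 1 / (real N * ln (real N) powr p)"

lemma gamma_scale_pos: "2 \<le> N \<Longrightarrow> 0 < gamma_scale p N"
  by (simp add: gamma_scale_def)

lemma gamma_scale_le_inverse:
  assumes "3 \<le> N" "0 \<le> p"
  shows "gamma_scale p N \<le> 1 / real N"
proof -
  have "exp 1 \<le> real N" using exp_le assms(1) by linarith
  then have "1 \<le> ln (real N)" using assms(1) by (simp add: ln_ge_iff)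
  then have "1 \<le> ln (real N) powr p" using assms(2) by (rule ge_one_powr_ge_zero)
  then show ?thesis using assms(1) unfolding gamma_scale_def
    by (simp add: divide_le_eq_1 mult_le_cancel_left1 frac_le)
qed

lemma gamma_scale_le_double:
  assumes "2 \<le> N" "N \<le> M" "M \<le> 2 * N" "0 \<le> p"
  shows "gamma_scale p N \<le> 2 powr (1 + p) * gamma_scale p M"
proof -
  have "ln (real M) \<le> ln (2 * real N)" using assms by simp
  also have "\<dots> \<le> 2 * ln (real N)" using assms(1) by (simp add: ln_mult)
  finally have "ln (real M) powr p \<le> 2 powr p * ln (real N) powr p"
    using assms by (simp add: powr_mono2 powr_mult[symmetric])
  then have "real M * ln (real M) powr p \<le> (2 * real N) * (2 powr p * ln (real N) powr p)"
    using assms by (intro mult_mono) auto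
  also have "\<dots> = 2 powr (1 + p) * (real N * ln (real N) powr p)"
    by (simp add: powr_add)
  finally show ?thesis
    using assms unfolding gamma_scale_def by (simp add: field_simps)
qed

lemma dyadic_gamma_scale_le_inverse:
  assumes "0 \<le> p" "1 \<le> j"
  shows "gamma_scale p ((2::nat) ^ Suc j) \<le> 1 / real ((2::nat) ^ Suc j)"
proof (rule gamma_scale_le_inverse[OF _ assms(1)])
  have "(2::nat) ^ 2 \<le> 2 ^ Suc j" using assms(2) by (intro power_increasing) auto
  then show "3 \<le> (2::nat) ^ Suc j" by simp
qed

lemma dyadic_gamma_scale_tendsto_zero:
  assumes "0 \<le> p"
  shows "(\<lambda>j. gamma_scale p ((2::nat) ^ Suc j)) \<longlonglongrightarrow> 0"
proof (rule Lim_null_comparison)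
  show "\<forall>\<^sub>F j in sequentially. norm (gamma_scale p (2 ^ Suc j)) \<le> 1 / real ((2::nat) ^ Suc j)"
    using eventually_ge_at_top[of 1]
  proof eventually_elim
    case (elim j)
    then show ?case
      using dyadic_gamma_scale_le_inverse[OF assms elim] gamma_scale_pos[of "2 ^ Suc j" p] by simp
  qed
  show "(\<lambda>j. 1 / real ((2::nat) ^ Suc j)) \<longlonglongrightarrow> 0" by real_asymp
qed

lemma min_mult_dyadic_gamma_scale_le:
  assumes "0 \<le> p" "1 \<le> j" "0 \<le> s"
  shows "min 1 s * gamma_scale p (2 ^ Suc j) \<le> min (s / real ((2::nat) ^ Suc j)) (gamma_scale p (2 ^ Suc j))"
proof -
  have "0 < gamma_scale p (2 ^ Suc j)" by (rule gamma_scale_pos) simp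
  then have "min 1 s * gamma_scale p (2 ^ Suc j) \<le> c * gamma_scale p (2 ^ Suc j)" if "c \<in> {1, s}" for c
    using that by (intro mult_right_mono) auto
  moreover have "s * gamma_scale p (2 ^ Suc j) \<le> s * (1 / real ((2::nat) ^ Suc j))"
    using assms by (intro mult_left_mono dyadic_gamma_scale_le_inverse) auto
  ultimately show ?thesis by fastforce
qed

lemma summable_dyadic_gamma_scale:
  assumes "1 < p"
  shows "summable (\<lambda>j. real ((2::nat) ^ Suc j) * gamma_scale p (2 ^ Suc j))"
proof -
  have "ln (real ((2::nat) ^ Suc j)) = real (Suc j) * ln 2" for j
    by (simp only: of_nat_power of_nat_numeral ln_realpow)
  then have "real ((2::nat) ^ Suc j) * gamma_scale p (2 ^ Suc j) = ln 2 powr - p * real (Suc j) powr - p" for j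
    by (simp add: gamma_scale_def powr_minus_divide powr_mult)
  moreover have "summable (\<lambda>j. real (Suc j) powr - p)"
    using assms by (subst summable_Suc_iff) (simp add: summable_real_powr_iff)
  ultimately show ?thesis by (simp add: summable_mult)
qed

lemma summable_card_mult_dyadic_gamma_scales:
  fixes B :: "nat \<Rightarrow> 'a set"
  assumes "1 < p" "1 < q" "0 \<le> A" and card: "\<And>j. real (card (B j)) \<le> C * real ((2::nat) ^ Suc j)"
  shows "summable (\<lambda>j. real (card (B j)) * (gamma_scale p (2 ^ Suc j) + A * gamma_scale q (2 ^ Suc j)))"
proof (rule summable_comparison_test')
  show "summable (\<lambda>j. C * (real ((2::nat) ^ Suc j) * gamma_scale p (2 ^ Suc j))
      + C * A * (real ((2::nat) ^ Suc j) * gamma_scale q (2 ^ Suc j)))"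
    using assms(1,2) by (intro summable_add summable_mult summable_dyadic_gamma_scale)
  fix j
  have "0 \<le> gamma_scale p (2 ^ Suc j) + A * gamma_scale q (2 ^ Suc j)"
    using gamma_scale_pos[of "2 ^ Suc j"] \<open>0 \<le> A\<close> by (simp add: less_imp_le)
  then have "norm (real (card (B j)) * (gamma_scale p (2 ^ Suc j) + A * gamma_scale q (2 ^ Suc j)))
      \<le> C * real ((2::nat) ^ Suc j) * (gamma_scale p (2 ^ Suc j) + A * gamma_scale q (2 ^ Suc j))"
    using card by (simp add: mult_right_mono)
  then show "norm (real (card (B j)) * (gamma_scale p (2 ^ Suc j) + A * gamma_scale q (2 ^ Suc j)))
      \<le> C * (real ((2::nat) ^ Suc j) * gamma_scale p (2 ^ Suc j))
        + C * A * (real ((2::nat) ^ Suc j) * gamma_scale q (2 ^ Suc j))"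
    by (simp add: algebra_simps)
qed

text \<open>Between consecutive dyadic scales \<open>gamma_scale p\<close> changes by at most the factor \<open>2 powr (1 + p)\<close>;
  below the first scale where the bound holds, positivity of \<open>g\<close> suffices.\<close>
lemma dyadic_lower_bound_extends:
  fixes g :: "nat \<Rightarrow> real"
  assumes "0 \<le> p" "0 < C"
    and pos: "\<And>N. 2 \<le> N \<Longrightarrow> 0 < g N"
    and antimono: "\<And>N N'. 2 \<le> N \<Longrightarrow> N \<le> N' \<Longrightarrow> g N' \<le> g N"
    and dyadic: "\<forall>\<^sub>F j in sequentially. C * gamma_scale p (2 ^ Suc j) \<le> g (2 ^ Suc j)"
  shows "\<exists>C'>0. \<forall>N\<ge>2. C' * gamma_scale p N \<le> g N"
proof -
  obtain J where J: "\<And>j. J \<le> j \<Longrightarrow> C * gamma_scale p (2 ^ Suc j) \<le> g (2 ^ Suc j)"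
    using dyadic unfolding eventually_sequentially by blast
  define C2 where "C2 = Min ((\<lambda>N. g N / gamma_scale p N) ` {2..2 ^ Suc J})"
  define C' where "C' = min C2 (C / 2 powr (1 + p))"
  have "0 < C2"
    unfolding C2_def using pos gamma_scale_pos by (subst Min_gr_iff) (auto simp: Suc_le_eq)
  then have "0 < C'" using \<open>0 < C\<close> by (simp add: C'_def)
  moreover have "C' * gamma_scale p N \<le> g N" if N2: "2 \<le> N" for N
  proof (cases "N \<le> 2 ^ Suc J")
    case True
    have "C' \<le> g N / gamma_scale p N"
      unfolding C'_def C2_def using N2 True by (intro min.coboundedI1 Min_le) auto
    then show ?thesis using gamma_scale_pos[OF N2] by (simp add: le_divide_eq)
  next
    case False
    obtain j where j: "2 ^ j < N" "N \<le> 2 ^ Suc j" using ex_power_ivl2[of 2 N] N2 by auto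
    have "(2::nat) ^ Suc J < 2 ^ Suc j" using False j(2) by linarith
    then have "Suc J < Suc j" by (rule power_less_imp_less_exp[rotated]) simp
    then have "J \<le> j" by simp
    have "C' * gamma_scale p N \<le> (C / 2 powr (1 + p)) * (2 powr (1 + p) * gamma_scale p (2 ^ Suc j))"
      using N2 j less_imp_le[OF gamma_scale_pos[OF N2]] assms(1,2)
      by (intro mult_mono gamma_scale_le_double) (auto simp: C'_def)
    also have "\<dots> = C * gamma_scale p (2 ^ Suc j)" by simp
    also have "\<dots> \<le> g (2 ^ Suc j)" using J[OF \<open>J \<le> j\<close>] .
    also have "\<dots> \<le> g N" using antimono N2 j(2) by blast
    finally show ?thesis .
  qed
  ultimately show ?thesis by blast
qed

section \<open>Borel--Cantelli for near-integer multiples\<close>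

definition near_int_multiples :: "real \<Rightarrow> real \<Rightarrow> real \<Rightarrow> real set" where
  "near_int_multiples A b \<eta> = (\<Union>k\<in>{-\<lceil>A * \<bar>b\<bar>\<rceil>..\<lceil>A * \<bar>b\<bar>\<rceil>}. ball (of_int k / b) (\<eta> / \<bar>b\<bar>))"

lemma near_int_multiplesI:
  assumes "\<bar>\<alpha>\<bar> \<le> A" "\<eta> \<le> 1" "b \<noteq> 0" "\<bar>\<alpha> * b - of_int k\<bar> < \<eta>"
  shows "\<alpha> \<in> near_int_multiples A b \<eta>"
proof -
  have "\<bar>\<alpha> * b\<bar> \<le> A * \<bar>b\<bar>" using assms(1) by (simp add: abs_mult mult_right_mono)
  then have "\<bar>real_of_int k\<bar> < A * \<bar>b\<bar> + 1" using assms(2,4) by linarith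
  then have "real_of_int \<bar>k\<bar> < real_of_int (\<lceil>A * \<bar>b\<bar>\<rceil> + 1)"
    using le_of_int_ceiling[of "A * \<bar>b\<bar>"] by (simp only: of_int_add of_int_abs)
  then have "k \<in> {-\<lceil>A * \<bar>b\<bar>\<rceil>..\<lceil>A * \<bar>b\<bar>\<rceil>}" by (simp only: of_int_less_iff) auto
  moreover have "of_int k / b - \<alpha> = (of_int k - \<alpha> * b) / b" using assms(3) by (simp add: field_simps)
  then have "dist (of_int k / b) \<alpha> = \<bar>\<alpha> * b - of_int k\<bar> / \<bar>b\<bar>"
    by (simp add: dist_real_def abs_minus_commute)
  then have "dist (of_int k / b) \<alpha> < \<eta> / \<bar>b\<bar>"
    using assms(3,4) by (simp add: divide_strict_right_mono)
  ultimately show ?thesis unfolding near_int_multiples_def by auto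
qed

lemma near_int_multiples_sets [measurable]: "near_int_multiples A b \<eta> \<in> sets borel"
  unfolding near_int_multiples_def by (auto intro!: borel_open)

lemma bounded_near_int_multiples: "bounded (near_int_multiples A b \<eta>)"
  unfolding near_int_multiples_def by (intro bounded_UN) auto

lemma measure_near_int_multiples_le:
  assumes "0 \<le> A" "0 \<le> \<eta>" "b \<noteq> 0"
  shows "measure lborel (near_int_multiples A b \<eta>) \<le> (4 * A + 6 / \<bar>b\<bar>) * \<eta>"
proof -
  let ?K = "\<lceil>A * \<bar>b\<bar>\<rceil>"
  have "measure lborel (near_int_multiples A b \<eta>) \<le> (\<Sum>k\<in>{-?K..?K}. measure lborel (ball (of_int k / b) (\<eta> / \<bar>b\<bar>)))"
    unfolding near_int_multiples_def by (rule measure_UNION_le) auto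
  also have "\<dots> = real (card {-?K..?K}) * (2 * \<eta> / \<bar>b\<bar>)"
    using assms by (simp add: ball_eq_greaterThanLessThan measure_def)
  also have "real (card {-?K..?K}) = 2 * of_int ?K + 1"
  proof -
    have "0 \<le> A * \<bar>b\<bar>" using assms(1) by simp
    then have "0 \<le> ?K" by simp
    then show ?thesis by simp
  qed
  also have "(2 * of_int ?K + 1) * (2 * \<eta> / \<bar>b\<bar>) \<le> (2 * (A * \<bar>b\<bar>) + 3) * (2 * \<eta> / \<bar>b\<bar>)"
    using assms by (intro mult_right_mono) (linarith, auto)
  also have "\<dots> = (4 * A + 6 / \<bar>b\<bar>) * \<eta>" using assms(3) by (simp add: field_simps)
  finally show ?thesis .
qed

lemma measure_UN_near_int_multiples_le:
  assumes "finite B" "0 \<le> \<eta>" "0 < t" "0 \<le> A"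
  shows "measure lborel (\<Union>b\<in>{b\<in>B. t \<le> \<bar>b\<bar>}. near_int_multiples A b \<eta>) \<le> (4 * A + 6 / t) * (real (card B) * \<eta>)"
proof -
  have "measure lborel (\<Union>b\<in>{b\<in>B. t \<le> \<bar>b\<bar>}. near_int_multiples A b \<eta>)
      \<le> (\<Sum>b\<in>{b\<in>B. t \<le> \<bar>b\<bar>}. measure lborel (near_int_multiples A b \<eta>))"
    using assms(1) by (intro measure_UNION_le) auto
  also have "\<dots> \<le> (\<Sum>b\<in>{b\<in>B. t \<le> \<bar>b\<bar>}. (4 * A + 6 / t) * \<eta>)"
  proof (rule sum_mono)
    fix b assume "b \<in> {b\<in>B. t \<le> \<bar>b\<bar>}"
    then have "t \<le> \<bar>b\<bar>" by simp
    then have "(4 * A + 6 / \<bar>b\<bar>) * \<eta> \<le> (4 * A + 6 / t) * \<eta>"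
      using assms(2,3) by (intro mult_right_mono add_left_mono divide_left_mono) auto
    moreover have "b \<noteq> 0" using \<open>0 < t\<close> \<open>t \<le> \<bar>b\<bar>\<close> by auto
    ultimately show "measure lborel (near_int_multiples A b \<eta>) \<le> (4 * A + 6 / t) * \<eta>"
      using measure_near_int_multiples_le[OF assms(4,2), of b] by linarith
  qed
  also have "\<dots> \<le> real (card B) * ((4 * A + 6 / t) * \<eta>)"
    using assms by (simp add: card_mono mult_right_mono)
  finally show ?thesis by (simp add: mult_ac)
qed

lemma AE_eventually_dist_int_mult_ge:
  fixes B :: "nat \<Rightarrow> real set" and \<eta> :: "nat \<Rightarrow> real" and A t :: real
  assumes fin: "\<And>j. finite (B j)" and nonneg: "\<And>j. 0 \<le> \<eta> j" and "0 < t" "0 \<le> A"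
    and small: "\<forall>\<^sub>F j in sequentially. \<eta> j \<le> 1"
    and summable: "summable (\<lambda>j. real (card (B j)) * \<eta> j)"
  shows "AE \<alpha> in lborel. \<bar>\<alpha>\<bar> \<le> A \<longrightarrow>
    (\<forall>\<^sub>F j in sequentially. \<forall>b\<in>B j. t \<le> \<bar>b\<bar> \<longrightarrow> \<eta> j \<le> dist_int (\<alpha> * b))"
proof -
  define G where "G j = (\<Union>b\<in>{b\<in>B j. t \<le> \<bar>b\<bar>}. near_int_multiples A b (\<eta> j))" for j
  have G_sets: "G j \<in> sets lborel" for j
    unfolding G_def using fin by (simp add: sets.finite_UN)
  have G_finite: "emeasure lborel (G j) < \<infinity>" for j
    unfolding G_def using fin by (intro emeasure_bounded_finite bounded_UN) (auto intro: bounded_near_int_multiples)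
  have G_le: "measure lborel (G j) \<le> (4 * A + 6 / t) * (real (card (B j)) * \<eta> j)" for j
    unfolding G_def using fin nonneg \<open>0 < t\<close> \<open>0 \<le> A\<close> by (rule measure_UN_near_int_multiples_le)
  have "summable (\<lambda>j. measure lborel (G j))"
    by (rule summable_comparison_test'[OF summable_mult[OF summable, of "4 * A + 6 / t"]]) (use G_le in simp)
  then have "AE \<alpha> in lborel. \<forall>\<^sub>F j in sequentially. \<alpha> \<in> space lborel - G j"
    by (rule borel_cantelli_AE1[OF G_sets G_finite])
  then show ?thesis
  proof (rule AE_mp, intro AE_I2 impI)
    fix \<alpha> assume avoids: "\<forall>\<^sub>F j in sequentially. \<alpha> \<in> space lborel - G j" and "\<bar>\<alpha>\<bar> \<le> A"
    from small avoids show "\<forall>\<^sub>F j in sequentially. \<forall>b\<in>B j. t \<le> \<bar>b\<bar> \<longrightarrow> \<eta> j \<le> dist_int (\<alpha> * b)"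
    proof eventually_elim
      case (elim j)
      show ?case
      proof (intro ballI impI)
        fix b assume "b \<in> B j" "t \<le> \<bar>b\<bar>"
        show "\<eta> j \<le> dist_int (\<alpha> * b)"
        proof (rule ccontr)
          assume "\<not> \<eta> j \<le> dist_int (\<alpha> * b)"
          then have "dist_int (\<alpha> * b) < \<eta> j" by simp
          then obtain k where "\<bar>\<alpha> * b - of_int k\<bar> < \<eta> j" by (rule dist_int_lessE)
          moreover have "b \<noteq> 0" using \<open>0 < t\<close> \<open>t \<le> \<bar>b\<bar>\<close> by auto
          ultimately have "\<alpha> \<in> near_int_multiples A b (\<eta> j)"
            using elim(1) \<open>\<bar>\<alpha>\<bar> \<le> A\<close> by (intro near_int_multiplesI)
          then have "\<alpha> \<in> G j" unfolding G_def using \<open>b \<in> B j\<close> \<open>t \<le> \<bar>b\<bar>\<close> by blast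
          then show False using elim(2) by simp
        qed
      qed
    qed
  qed
qed

text \<open>A difference \<open>d\<close> is either so small that \<open>\<alpha> * d\<close> is itself the distance to \<open>\<int>\<close>, or it is
  \<open>\<gamma>\<close>-close to a point \<open>b\<close> bounded away from zero, and \<open>\<alpha> * d\<close> inherits the distance of \<open>\<alpha> * b\<close>.\<close>
lemma dist_int_mult_ge_min:
  fixes \<alpha> d b A \<gamma> \<eta> s :: real
  assumes "0 < A" "1 / A \<le> \<bar>\<alpha>\<bar>" "\<bar>\<alpha>\<bar> \<le> A" "\<bar>d - b\<bar> < \<gamma>" "\<gamma> \<le> 1 / (4 * A)" "s \<le> \<bar>d\<bar>"
    and far: "1 / (4 * A) \<le> \<bar>b\<bar> \<Longrightarrow> \<eta> \<le> dist_int (\<alpha> * b)"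
  shows "min (s / A) (\<eta> - A * \<gamma>) \<le> dist_int (\<alpha> * d)"
proof (cases "\<bar>d\<bar> < 1 / (2 * A)")
  case True
  have "\<bar>\<alpha> * d\<bar> \<le> A * (1 / (2 * A))"
    unfolding abs_mult using assms(3) True by (intro mult_mono) auto
  then have "dist_int (\<alpha> * d) = \<bar>\<alpha>\<bar> * \<bar>d\<bar>" using \<open>0 < A\<close> by (simp add: dist_int_eq_abs abs_mult)
  moreover have "1 / A * s \<le> 1 / A * \<bar>d\<bar>" using assms(1,6) by (intro mult_left_mono) auto
  moreover have "\<dots> \<le> \<bar>\<alpha>\<bar> * \<bar>d\<bar>" using assms(2) by (intro mult_right_mono) auto
  ultimately show ?thesis by simp
next
  case False
  have "1 / (4 * A) = 1 / (2 * A) - 1 / (4 * A)" by simp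
  then have "1 / (4 * A) \<le> \<bar>b\<bar>" using False assms(4,5) by linarith
  moreover have "\<bar>\<alpha> * d - \<alpha> * b\<bar> \<le> A * \<gamma>"
    unfolding right_diff_distrib[symmetric] abs_mult using assms(3,4) by (intro mult_mono) auto
  ultimately show ?thesis using far dist_int_le_add_abs_diff[of "\<alpha> * b" "\<alpha> * d"] by linarith
qed

lemma delta_min_ge_min:
  fixes x :: "nat \<Rightarrow> real"
  assumes "2 \<le> N" "0 < A" "1 / A \<le> \<bar>\<alpha>\<bar>" "\<bar>\<alpha>\<bar> \<le> A" "\<gamma> \<le> 1 / (4 * A)"
    and sep: "\<And>m n. m \<in> {1..N} \<Longrightarrow> n \<in> {1..N} \<Longrightarrow> m \<noteq> n \<Longrightarrow> s \<le> \<bar>x m - x n\<bar>"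
    and covers: "\<forall>a\<in>diffset (Xset x N). \<exists>b\<in>B. \<bar>a - b\<bar> < \<gamma>"
    and far: "\<forall>b\<in>B. 1 / (4 * A) \<le> \<bar>b\<bar> \<longrightarrow> \<eta> \<le> dist_int (\<alpha> * b)"
  shows "min (s / A) (\<eta> - A * \<gamma>) \<le> delta_min x \<alpha> N"
proof (rule delta_min_attained[OF assms(1), of x \<alpha>])
  fix m n assume mn: "m \<in> {1..N}" "n \<in> {1..N}" "m \<noteq> n"
    and "delta_min x \<alpha> N = dist_int (\<alpha> * x m - \<alpha> * x n)"
  moreover have "x m - x n \<in> diffset (Xset x N)" using mn unfolding diffset_def Xset_def by blast
  then obtain b where "b \<in> B" "\<bar>x m - x n - b\<bar> < \<gamma>" using covers by blast
  then have "min (s / A) (\<eta> - A * \<gamma>) \<le> dist_int (\<alpha> * (x m - x n))"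
    using assms(2-5) far sep[OF mn] by (intro dist_int_mult_ge_min) auto
  ultimately show ?thesis by (simp add: right_diff_distrib)
qed

lemma AE_eventually_dyadic_delta_min_ge:
  fixes x :: "nat \<Rightarrow> real" and A \<epsilon> \<epsilon>0 g Cc :: real
  assumes "0 < A" "0 < \<epsilon>" "0 < \<epsilon>0"
    and sep: "\<And>M m n. m \<in> {1..M} \<Longrightarrow> n \<in> {1..M} \<Longrightarrow> m \<noteq> n \<Longrightarrow> g / real M \<le> \<bar>x m - x n\<bar>"
    and cov: "\<And>N. 2 \<le> N \<Longrightarrow> real (cov (diffset (Xset x N)) (gamma_scale (1 + \<epsilon>0) N)) \<le> Cc * real N"
  shows "AE \<alpha> in lborel. 1 / A \<le> \<bar>\<alpha>\<bar> \<and> \<bar>\<alpha>\<bar> \<le> A \<longrightarrow> (\<forall>\<^sub>F j in sequentially.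
    min (g / A / real (2 ^ Suc j)) (gamma_scale (1 + \<epsilon>) (2 ^ Suc j)) \<le> delta_min x \<alpha> (2 ^ Suc j))"
proof -
  define M where "M j = (2::nat) ^ Suc j" for j
  define \<gamma> where "\<gamma> j = gamma_scale (1 + \<epsilon>0) (M j)" for j
  define \<delta> where "\<delta> j = gamma_scale (1 + \<epsilon>) (M j)" for j
  define \<eta> where "\<eta> j = \<delta> j + A * \<gamma> j" for j
  \<comment> \<open>\<open>A * \<gamma> j\<close> absorbs the error \<open>|\<alpha> (d - b)|\<close> of replacing a difference by its covering point\<close>
  have M2: "2 \<le> M j" for j
    unfolding M_def using power_increasing[of 1 "Suc j" "2::nat"] by simp
  have \<eta>_nonneg: "0 \<le> \<eta> j" for j
    using gamma_scale_pos[OF M2, of "1 + \<epsilon>0" j] gamma_scale_pos[OF M2, of "1 + \<epsilon>" j] \<open>0 < A\<close>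
    unfolding \<eta>_def \<delta>_def \<gamma>_def by simp_all
  obtain B where B_finite: "\<And>N. finite (B N)"
    and B_covers: "\<And>N. 2 \<le> N \<Longrightarrow> \<forall>a\<in>diffset (Xset x N). \<exists>b\<in>B N. \<bar>a - b\<bar> < gamma_scale (1 + \<epsilon>0) N"
    and B_card: "\<And>N. 2 \<le> N \<Longrightarrow> real (card (B N)) \<le> Cc * real N"
    using cov_bound_imp_coverings[OF gamma_scale_pos cov] by blast
  have "\<gamma> \<longlonglongrightarrow> 0" "\<delta> \<longlonglongrightarrow> 0"
    unfolding \<delta>_def \<gamma>_def M_def using assms(2,3) by (intro dyadic_gamma_scale_tendsto_zero; simp)+
  then have "\<gamma> \<longlonglongrightarrow> 0" "\<eta> \<longlonglongrightarrow> 0"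
    using tendsto_add[OF _ tendsto_mult[OF tendsto_const]] unfolding \<eta>_def by fastforce+
  then have \<gamma>_small: "\<forall>\<^sub>F j in sequentially. \<gamma> j \<le> 1 / (4 * A)" and \<eta>_small: "\<forall>\<^sub>F j in sequentially. \<eta> j \<le> 1"
    using order_tendstoD(2)[of \<gamma> 0 sequentially "1 / (4 * A)"] order_tendstoD(2)[of \<eta> 0 sequentially 1] \<open>0 < A\<close>
    by (auto elim: eventually_mono)
  have "summable (\<lambda>j. real (card (B (M j))) * \<eta> j)"
    using summable_card_mult_dyadic_gamma_scales[of "1 + \<epsilon>" "1 + \<epsilon>0" A "\<lambda>j. B (M j)" Cc]
      assms(1-3) B_card[OF M2]
    unfolding \<eta>_def \<delta>_def \<gamma>_def M_def by simp
  then have "AE \<alpha> in lborel. \<bar>\<alpha>\<bar> \<le> A \<longrightarrow>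
      (\<forall>\<^sub>F j in sequentially. \<forall>b\<in>B (M j). 1 / (4 * A) \<le> \<bar>b\<bar> \<longrightarrow> \<eta> j \<le> dist_int (\<alpha> * b))"
    using \<open>0 < A\<close> by (intro AE_eventually_dist_int_mult_ge[of "\<lambda>j. B (M j)"] B_finite \<eta>_nonneg \<eta>_small) auto
  then show ?thesis
  proof (rule AE_mp, intro AE_I2 impI)
    fix \<alpha> assume "\<bar>\<alpha>\<bar> \<le> A \<longrightarrow> (\<forall>\<^sub>F j in sequentially. \<forall>b\<in>B (M j). 1 / (4 * A) \<le> \<bar>b\<bar> \<longrightarrow> \<eta> j \<le> dist_int (\<alpha> * b))"
      and \<alpha>: "1 / A \<le> \<bar>\<alpha>\<bar> \<and> \<bar>\<alpha>\<bar> \<le> A"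
    then have "\<forall>\<^sub>F j in sequentially. \<forall>b\<in>B (M j). 1 / (4 * A) \<le> \<bar>b\<bar> \<longrightarrow> \<eta> j \<le> dist_int (\<alpha> * b)"
      by blast
    with \<gamma>_small show "\<forall>\<^sub>F j in sequentially.
      min (g / A / real (2 ^ Suc j)) (gamma_scale (1 + \<epsilon>) (2 ^ Suc j)) \<le> delta_min x \<alpha> (2 ^ Suc j)"
    proof eventually_elim
      case (elim j)
      have "min (g / real (M j) / A) (\<eta> j - A * \<gamma> j) \<le> delta_min x \<alpha> (M j)"
        using M2 \<open>0 < A\<close> \<alpha> elim sep B_covers[OF M2] unfolding \<gamma>_def by (intro delta_min_ge_min) auto
      then show ?case by (simp add: \<eta>_def \<delta>_def M_def mult.commute)
    qed
  qed
qed

lemma AE_dyadic_delta_min_lower_bound: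
  fixes x :: "nat \<Rightarrow> real" and \<epsilon> \<epsilon>0 g Cc :: real
  assumes "0 < \<epsilon>" "0 < \<epsilon>0" "0 < g"
    and sep: "\<And>M m n. m \<in> {1..M} \<Longrightarrow> n \<in> {1..M} \<Longrightarrow> m \<noteq> n \<Longrightarrow> g / real M \<le> \<bar>x m - x n\<bar>"
    and cov: "\<And>N. 2 \<le> N \<Longrightarrow> real (cov (diffset (Xset x N)) (gamma_scale (1 + \<epsilon>0) N)) \<le> Cc * real N"
  shows "AE \<alpha> in lborel. \<alpha> \<noteq> 0 \<longrightarrow> (\<exists>C>0. \<forall>\<^sub>F j in sequentially.
    C * gamma_scale (1 + \<epsilon>) (2 ^ Suc j) \<le> delta_min x \<alpha> (2 ^ Suc j))"
proof -
  have "AE \<alpha> in lborel. \<forall>a::nat. 1 / real (Suc a) \<le> \<bar>\<alpha>\<bar> \<and> \<bar>\<alpha>\<bar> \<le> real (Suc a) \<longrightarrow>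
      (\<forall>\<^sub>F j in sequentially. min (g / real (Suc a) / real (2 ^ Suc j)) (gamma_scale (1 + \<epsilon>) (2 ^ Suc j))
        \<le> delta_min x \<alpha> (2 ^ Suc j))"
    using AE_eventually_dyadic_delta_min_ge[OF _ assms(1,2) sep cov] by (subst AE_all_countable) auto
  then show ?thesis
  proof (rule AE_mp, intro AE_I2 impI)
    fix \<alpha> :: real assume "\<alpha> \<noteq> 0" and bounds: "\<forall>a::nat. 1 / real (Suc a) \<le> \<bar>\<alpha>\<bar> \<and> \<bar>\<alpha>\<bar> \<le> real (Suc a) \<longrightarrow>
      (\<forall>\<^sub>F j in sequentially. min (g / real (Suc a) / real (2 ^ Suc j)) (gamma_scale (1 + \<epsilon>) (2 ^ Suc j))
        \<le> delta_min x \<alpha> (2 ^ Suc j))"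
    define a where "a = nat \<lceil>\<bar>\<alpha>\<bar> + 1 / \<bar>\<alpha>\<bar>\<rceil>"
    have "\<bar>\<alpha>\<bar> + 1 / \<bar>\<alpha>\<bar> \<le> real (Suc a)" unfolding a_def by linarith
    moreover have "0 < 1 / \<bar>\<alpha>\<bar>" using \<open>\<alpha> \<noteq> 0\<close> by simp
    ultimately have "\<bar>\<alpha>\<bar> \<le> real (Suc a)" "1 / \<bar>\<alpha>\<bar> \<le> real (Suc a)" by linarith+
    then have "\<forall>\<^sub>F j in sequentially. min (g / real (Suc a) / real (2 ^ Suc j)) (gamma_scale (1 + \<epsilon>) (2 ^ Suc j))
        \<le> delta_min x \<alpha> (2 ^ Suc j)"
      using bounds \<open>\<alpha> \<noteq> 0\<close> by (simp add: field_simps)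
    with eventually_ge_at_top[of 1] have "\<forall>\<^sub>F j in sequentially.
        min 1 (g / real (Suc a)) * gamma_scale (1 + \<epsilon>) (2 ^ Suc j) \<le> delta_min x \<alpha> (2 ^ Suc j)"
    proof eventually_elim
      case (elim j)
      have "min 1 (g / real (Suc a)) * gamma_scale (1 + \<epsilon>) (2 ^ Suc j)
          \<le> min (g / real (Suc a) / real (2 ^ Suc j)) (gamma_scale (1 + \<epsilon>) (2 ^ Suc j))"
        using \<open>0 < \<epsilon>\<close> \<open>0 < g\<close> elim(1) by (intro min_mult_dyadic_gamma_scale_le) auto
      then show ?case using elim(2) by linarith
    qed
    moreover have "0 < min 1 (g / real (Suc a))" using \<open>0 < g\<close> by simp
    ultimately show "\<exists>C>0. \<forall>\<^sub>F j in sequentially. C * gamma_scale (1 + \<epsilon>) (2 ^ Suc j) \<le> delta_min x \<alpha> (2 ^ Suc j)"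
      by blast
  qed
qed

theorem theorem10:
  fixes x :: "nat \<Rightarrow> real" and c \<epsilon>0 :: real
  assumes c_pos: "c > 0"
    and gap: "\<And>n. n \<ge> 1 \<Longrightarrow> x (n + 1) - x n \<ge> c * ln (real n) / real n"
    and distinct: "inj_on x {1..}"
    and eps0_pos: "\<epsilon>0 > 0"
    and cov_bound: "\<exists>C>0. \<forall>N\<ge>2. real (cov (diffset (Xset x N))
                      (1 / (real N * ln (real N) powr (1 + \<epsilon>0)))) \<le> C * real N"
  shows "\<forall>\<epsilon>>0. AE \<alpha> in lborel. \<exists>C>0. \<forall>N\<ge>2.
           delta_min x \<alpha> N \<ge> C / (real N * ln (real N) powr (1 + \<epsilon>))"
proof (intro allI impI)
  fix \<epsilon> :: real assume "0 < \<epsilon>"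
  obtain g where "0 < g"
    and sep: "\<And>M m n. m \<in> {1..M} \<Longrightarrow> n \<in> {1..M} \<Longrightarrow> m \<noteq> n \<Longrightarrow> g / real M \<le> \<bar>x m - x n\<bar>"
    using gap_imp_separated[OF c_pos gap distinct] by blast
  obtain Cc where cov: "\<And>N. 2 \<le> N \<Longrightarrow> real (cov (diffset (Xset x N)) (gamma_scale (1 + \<epsilon>0) N)) \<le> Cc * real N"
    using cov_bound unfolding gamma_scale_def by blast
  have "AE \<alpha> in lborel. \<forall>m\<ge>1. \<forall>n\<ge>1. m \<noteq> n \<longrightarrow> \<alpha> * (x m - x n) \<notin> \<int>"
    using distinct by (rule AE_mult_differences_notin_Ints)
  moreover have "AE \<alpha> in lborel. \<alpha> \<noteq> 0 \<longrightarrow> (\<exists>C>0. \<forall>\<^sub>F j in sequentially.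
      C * gamma_scale (1 + \<epsilon>) (2 ^ Suc j) \<le> delta_min x \<alpha> (2 ^ Suc j))"
    using \<open>0 < \<epsilon>\<close> eps0_pos \<open>0 < g\<close> sep cov by (rule AE_dyadic_delta_min_lower_bound)
  ultimately show "AE \<alpha> in lborel. \<exists>C>0. \<forall>N\<ge>2. delta_min x \<alpha> N \<ge> C / (real N * ln (real N) powr (1 + \<epsilon>))"
  proof eventually_elim
    case (elim \<alpha>)
    have "\<alpha> \<noteq> 0" using elim(1) by fastforce
    then obtain C where "0 < C"
      and "\<forall>\<^sub>F j in sequentially. C * gamma_scale (1 + \<epsilon>) (2 ^ Suc j) \<le> delta_min x \<alpha> (2 ^ Suc j)"
      using elim(2) by blast
    moreover have "0 < delta_min x \<alpha> N" if "2 \<le> N" for N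
      using that elim(1) by (intro delta_min_pos) auto
    ultimately have "\<exists>C'>0. \<forall>N\<ge>2. C' * gamma_scale (1 + \<epsilon>) N \<le> delta_min x \<alpha> N"
      using \<open>0 < \<epsilon>\<close> by (intro dyadic_lower_bound_extends) (auto intro: delta_min_antimono)
    then show ?case by (simp add: gamma_scale_def)
  qed
qed

end
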